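(* Let $\mu$ be a probability measure on $\mathbb R^d$ absolutely continuous with Lebesgue density $f_\mu$. Let $\upsilon\in(0,1)$, $\xi\in(0,\infty)$, $\beta\in(0,\infty)$, $x\in\mathbb R^d$, $r\in(0,1/2]$ be such that $\bar B_\infty(x,r)\cap\mathcal R_\upsilon(\mu)\cap\{f_\mu\ge\xi\}\ne\emptyset$, and let $h\in[2r,1]$. Then $\mu(\bar B_\infty(x,h))\ge\upsilon\xi(h/2)^d$. If in addition $\beta\in(0,1]$ or $3r\le\upsilon h$, then $$\lambda_{\min}\Bigl(\int_{\bar B_\infty(x,h)}\Phi^\beta_{x,h}(z)\Phi^\beta_{x,h}(z)^\top\,d\mu(z)\Bigr)\ge2^{-(3d+1)}\,\upsilon\,c^0_{\min}\,\mu(\bar B_\infty(x,h)),$$ where $c^0_{\min}:=c_{\min}(d,\beta,2^{-(d+1)}\upsilon)\in(0,1]$.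
   Context: $\bar B_\infty(x,r)$ and $B_\infty(x,r)$ denote closed and open sup-norm balls. $\mathcal R_\upsilon(\mu):=\bigcap_{r\in(0,1)}\{x:\mu(B_\infty(x,r))\ge\upsilon r^d\sup_{x'\in B_\infty(x,(1+\upsilon)r)}f_\mu(x')\}$. $\mathcal V(\beta):=\{\nu\in\mathbb N_0^d:\sum_j\nu_j\le\lceil\beta\rceil-1\}$; $\Phi^\beta_{x,h}(z):=(((z-x)/h)^\nu)_{\nu\in\mathcal V(\beta)}$ with $w^\nu=\prod_jw_j^{\nu_j}$. For $a\in(0,1)$, $c_{\min}(d,\beta,a):=1\wedge\inf_K\lambda_{\min}(\int_K\Phi^\beta_{0,1}(z)\Phi^\beta_{0,1}(z)^\top dz)$, infimum over measurable $K\subseteq\bar B_\infty(0,1)$ with Lebesgue measure $\ge a$ (this quantity is positive). $\lambda_{\min}$: smallest eigenvalue. *)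

theory Defs
  imports "HOL-Probability.Probability"
begin

definition cball_inf :: "real^'n \<Rightarrow> real \<Rightarrow> (real^'n) set" where
  "cball_inf x r = {y. \<forall>i. \<bar>y$i - x$i\<bar> \<le> r}"

definition ball_inf :: "real^'n \<Rightarrow> real \<Rightarrow> (real^'n) set" where
  "ball_inf x r = {y. \<forall>i. \<bar>y$i - x$i\<bar> < r}"

definition reg_set :: "real \<Rightarrow> (real^'n) measure \<Rightarrow> (real^'n \<Rightarrow> real) \<Rightarrow> (real^'n) set" where
  "reg_set v M f = (\<Inter>r\<in>{0<..<1}. {x.
      emeasure M (ball_inf x r) \<ge>
        ennreal (v * r ^ CARD('n)) * (SUP x'\<in>ball_inf x ((1 + v) * r). ennreal (f x'))})"

definition multi_idx :: "real \<Rightarrow> ('n::finite \<Rightarrow> nat) set" where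
  "multi_idx \<beta> = {\<nu>. int (\<Sum>j\<in>UNIV. \<nu> j) \<le> \<lceil>\<beta>\<rceil> - 1}"

definition Phi :: "real^'n \<Rightarrow> real \<Rightarrow> real^'n \<Rightarrow> ('n \<Rightarrow> nat) \<Rightarrow> real" where
  "Phi x h z \<nu> = (\<Prod>j\<in>UNIV. ((z$j - x$j) / h) ^ (\<nu> j))"

definition eigenvalues_on :: "'k set \<Rightarrow> ('k \<Rightarrow> 'k \<Rightarrow> real) \<Rightarrow> real set" where
  "eigenvalues_on K A = {l. \<exists>v::'k \<Rightarrow> real. (\<exists>k\<in>K. v k \<noteq> 0) \<and>
       (\<forall>k\<in>K. (\<Sum>j\<in>K. A k j * v j) = l * v k)}"

definition lambda_min :: "'k set \<Rightarrow> ('k \<Rightarrow> 'k \<Rightarrow> real) \<Rightarrow> real" where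
  "lambda_min K A = Inf (eigenvalues_on K A)"

definition gram :: "(real^'n) measure \<Rightarrow> real^'n \<Rightarrow> real \<Rightarrow> ('n \<Rightarrow> nat) \<Rightarrow> ('n \<Rightarrow> nat) \<Rightarrow> real" where
  "gram M x h \<nu> \<nu>' = (\<integral>z. indicator (cball_inf x h) z * (Phi x h z \<nu> * Phi x h z \<nu>') \<partial>M)"

text \<open>c_min(d, beta, a), with d = CARD('n) encoded by the type.\<close>
definition c_min :: "'n::finite itself \<Rightarrow> real \<Rightarrow> real \<Rightarrow> real" where
  "c_min _ \<beta> a = min 1 (Inf {lambda_min (multi_idx \<beta> :: ('n \<Rightarrow> nat) set)
        (\<lambda>\<nu> \<nu>'. \<integral>z. indicator K z * (Phi (0::real^'n) 1 z \<nu> * Phi 0 1 z \<nu>') \<partial>lebesgue) | K.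
        K \<in> sets lebesgue \<and> K \<subseteq> cball_inf (0::real^'n) 1 \<and> emeasure lebesgue K \<ge> ennreal a})"

end

theory Submission
  imports Defs
begin

(* Let y be a regular point in the closed cube of radius r around x with f(y) >= xi.
  Regularity gives mass at least v (h/2)^d f(y) to the cube of radius h/2 around y, which
  lies inside the cube C of radius h around x.  For the Gram matrix, the quadratic form
  w |-> int_C (sum_nu w_nu Phi_nu)^2 dmu is compared with theta times the same Lebesgue
  integral over the level set L = {f >= theta} inside a cube around y, where F bounds f on
  an enlarged cube around y and theta = v F / 2^(d+1).  When 3 r <= v h the enlarged cube
  contains C, so mu(C) <= F (2h)^d, while regularity forces L to have Lebesgue measure at
  least v (h/2)^d / 2; rescaling C to the unit cube turns the Lebesgue Gram matrix of L into
  one of the matrices in the definition of c_min.  For beta <= 1 the Gram matrix is the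
  1 x 1 matrix mu(C). *)

definition quad_form :: "'k set \<Rightarrow> ('k \<Rightarrow> 'k \<Rightarrow> real) \<Rightarrow> ('k \<Rightarrow> real) \<Rightarrow> real" where
  "quad_form K A w = (\<Sum>i\<in>K. \<Sum>j\<in>K. w i * A i j * w j)"

definition sq_norm :: "'k set \<Rightarrow> ('k \<Rightarrow> real) \<Rightarrow> real" where
  "sq_norm K w = (\<Sum>i\<in>K. (w i)\<^sup>2)"

lemma quad_form_scale: "quad_form K A (\<lambda>k. c * w k) = c\<^sup>2 * quad_form K A w"
  by (simp add: quad_form_def sum_distrib_left power2_eq_square algebra_simps)

lemma sq_norm_scale: "sq_norm K (\<lambda>k. c * w k) = c\<^sup>2 * sq_norm K w"
  by (simp add: sq_norm_def sum_distrib_left power_mult_distrib)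

lemma sq_norm_nonneg: "0 \<le> sq_norm K w"
  by (simp add: sq_norm_def sum_nonneg)

lemma sq_norm_eq_0_iff: "finite K \<Longrightarrow> sq_norm K w = 0 \<longleftrightarrow> (\<forall>k\<in>K. w k = 0)"
  by (simp add: sq_norm_def sum_nonneg_eq_0_iff)

lemma sq_norm_pos_iff: "finite K \<Longrightarrow> 0 < sq_norm K w \<longleftrightarrow> (\<exists>k\<in>K. w k \<noteq> 0)"
  using sq_norm_eq_0_iff[of K w] sq_norm_nonneg[of K w] by (auto simp: less_le)

lemma quad_form_add:
  assumes "\<forall>i\<in>K. \<forall>j\<in>K. A i j = A j i"
  shows "quad_form K A (\<lambda>k. a k + t * u k)
    = quad_form K A a + 2 * t * (\<Sum>i\<in>K. u i * (\<Sum>j\<in>K. A i j * a j)) + t\<^sup>2 * quad_form K A u"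
proof -
  have "quad_form K A (\<lambda>k. a k + t * u k) = quad_form K A a
      + t * (\<Sum>i\<in>K. \<Sum>j\<in>K. u i * A i j * a j) + t * (\<Sum>i\<in>K. \<Sum>j\<in>K. a i * A i j * u j)
      + t\<^sup>2 * quad_form K A u"
    by (simp add: quad_form_def algebra_simps sum.distrib sum_distrib_left power2_eq_square)
  moreover have "(\<Sum>i\<in>K. \<Sum>j\<in>K. a i * A i j * u j) = (\<Sum>i\<in>K. \<Sum>j\<in>K. u i * A i j * a j)"
    using assms by (subst sum.swap) (auto intro!: sum.cong)
  moreover have "(\<Sum>i\<in>K. \<Sum>j\<in>K. u i * A i j * a j) = (\<Sum>i\<in>K. u i * (\<Sum>j\<in>K. A i j * a j))"
    by (simp add: sum_distrib_left algebra_simps)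
  ultimately show ?thesis by (simp add: algebra_simps)
qed

lemma sq_norm_add:
  "sq_norm K (\<lambda>k. a k + t * u k) = sq_norm K a + 2 * t * (\<Sum>i\<in>K. u i * a i) + t\<^sup>2 * sq_norm K u"
  by (simp add: sq_norm_def algebra_simps sum.distrib sum_distrib_left power2_eq_square)

lemma quad_form_eigenvector:
  "\<forall>k\<in>K. (\<Sum>j\<in>K. A k j * w j) = l * w k \<Longrightarrow> quad_form K A w = l * sq_norm K w"
proof -
  assume eig: "\<forall>k\<in>K. (\<Sum>j\<in>K. A k j * w j) = l * w k"
  have "quad_form K A w = (\<Sum>i\<in>K. w i * (\<Sum>j\<in>K. A i j * w j))"
    by (simp add: quad_form_def sum_distrib_left algebra_simps)
  also have "\<dots> = (\<Sum>i\<in>K. l * (w i)\<^sup>2)"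
    using eig by (intro sum.cong) (auto simp: power2_eq_square)
  finally show ?thesis by (simp add: sq_norm_def sum_distrib_left)
qed

lemma abs_le_1_of_sq_norm_eq_1:
  assumes "finite K" "sq_norm K w = 1" "k \<in> K"
  shows "\<bar>w k\<bar> \<le> 1"
proof -
  have "(w k)\<^sup>2 \<le> 1\<^sup>2"
    using member_le_sum[of k K "\<lambda>i. (w i)\<^sup>2"] assms by (auto simp: sq_norm_def)
  then show ?thesis using abs_le_square_iff[of "w k" 1] by simp
qed

lemma quad_form_min_on_unit_sphere:
  fixes A :: "'k \<Rightarrow> 'k \<Rightarrow> real"
  assumes "finite K" "K \<noteq> {}"
  obtains w0 where "sq_norm K w0 = 1" "\<And>w. sq_norm K w = 1 \<Longrightarrow> quad_form K A w0 \<le> quad_form K A w"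
proof -
  let ?X = "product_topology (\<lambda>_. euclideanreal) K"
  let ?P = "PiE K (\<lambda>_. {-1..1::real})"
  let ?S = "{w \<in> topspace ?X. sq_norm K w \<in> {1}}"
  have cont_norm: "continuous_map ?X euclideanreal (sq_norm K)"
    unfolding sq_norm_def using assms by (intro continuous_intros) auto
  have cont_form: "continuous_map ?X euclideanreal (quad_form K A)"
    unfolding quad_form_def using assms by (intro continuous_intros) auto
  have "closedin ?X ?S"
    by (rule closedin_continuous_map_preimage[OF cont_norm]) auto
  moreover have "?S \<subseteq> ?P"
  proof
    fix w assume "w \<in> ?S"
    then show "w \<in> ?P"
      using abs_le_1_of_sq_norm_eq_1[OF assms(1), of w] by (auto simp: PiE_def Pi_def abs_le_iff)
  qed
  ultimately have "compactin ?X ?S"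
    using closed_compactin[of ?X ?P ?S] by (simp add: compactin_PiE)
  then have "compactin euclideanreal (quad_form K A ` ?S)"
    by (rule image_compactin[OF _ cont_form])
  then have "compact (quad_form K A ` ?S)" by simp
  moreover obtain k0 where "k0 \<in> K" using assms by auto
  have "sq_norm K (restrict (\<lambda>k. if k = k0 then 1 else 0) K) = (\<Sum>i\<in>K. if i = k0 then 1 else 0)"
    unfolding sq_norm_def by (intro sum.cong) auto
  then have "restrict (\<lambda>k. if k = k0 then 1 else 0) K \<in> ?S"
    using assms \<open>k0 \<in> K\<close> by simp
  ultimately obtain w0 where w0: "w0 \<in> ?S"
    and min: "\<And>w. w \<in> ?S \<Longrightarrow> quad_form K A w0 \<le> quad_form K A w"
    using compact_attains_inf[of "quad_form K A ` ?S"] by blast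
  have "quad_form K A w0 \<le> quad_form K A w" if "sq_norm K w = 1" for w
  proof -
    have "sq_norm K (restrict w K) = 1" and "quad_form K A (restrict w K) = quad_form K A w"
      using that by (simp_all add: sq_norm_def quad_form_def)
    then show ?thesis using min[of "restrict w K"] by simp
  qed
  with w0 show ?thesis using that by blast
qed

lemma rayleigh_minimizer_exists:
  fixes A :: "'k \<Rightarrow> 'k \<Rightarrow> real"
  assumes "finite K" "K \<noteq> {}"
  obtains w0 where "sq_norm K w0 = 1" "\<And>w. quad_form K A w0 * sq_norm K w \<le> quad_form K A w"
proof -
  obtain w0 where w0: "sq_norm K w0 = 1"
    and min: "\<And>w. sq_norm K w = 1 \<Longrightarrow> quad_form K A w0 \<le> quad_form K A w"
    using quad_form_min_on_unit_sphere[OF assms] by blast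
  have "quad_form K A w0 * sq_norm K w \<le> quad_form K A w" for w
  proof (cases "sq_norm K w = 0")
    case True
    then have "quad_form K A w = 0" using assms by (simp add: sq_norm_eq_0_iff quad_form_def)
    then show ?thesis using True by simp
  next
    case False
    define c where "c = 1 / sqrt (sq_norm K w)"
    have pos: "0 < sq_norm K w" using False sq_norm_nonneg[of K w] by linarith
    then have c2: "c\<^sup>2 = 1 / sq_norm K w" by (simp add: c_def power_divide)
    then have "quad_form K A w0 \<le> c\<^sup>2 * quad_form K A w"
      using min[of "\<lambda>k. c * w k"] pos by (simp add: sq_norm_scale quad_form_scale)
    then show ?thesis using pos c2 by (simp add: field_simps)
  qed
  with w0 show ?thesis using that by blast
qed

text \<open>The first variation of \<open>quad_form - m * sq_norm\<close> at the minimiser in the direction of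
  the residual \<open>A w0 - m w0\<close> is twice the squared norm of that residual, so it must vanish.\<close>

lemma rayleigh_minimizer_eigenvector:
  fixes A :: "'k \<Rightarrow> 'k \<Rightarrow> real"
  assumes fin: "finite K" and sym: "\<forall>i\<in>K. \<forall>j\<in>K. A i j = A j i"
    and norm: "sq_norm K w0 = 1" and min: "\<And>w. quad_form K A w0 * sq_norm K w \<le> quad_form K A w"
  shows "\<forall>k\<in>K. (\<Sum>j\<in>K. A k j * w0 j) = quad_form K A w0 * w0 k"
proof -
  define m where "m = quad_form K A w0"
  define u where "u k = (\<Sum>j\<in>K. A k j * w0 j) - m * w0 k" for k
  define C where "C = quad_form K A u - m * sq_norm K u"
  have "(\<Sum>i\<in>K. u i * (\<Sum>j\<in>K. A i j * w0 j)) - m * (\<Sum>i\<in>K. u i * w0 i) = sq_norm K u"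
    by (simp add: sq_norm_def u_def power2_eq_square sum_distrib_left sum_subtractf[symmetric]
        algebra_simps)
  then have variation: "0 \<le> 2 * t * sq_norm K u + t\<^sup>2 * C" for t
    using min[of "\<lambda>k. w0 k + t * u k"] norm
    unfolding quad_form_add[OF sym] sq_norm_add C_def m_def by (simp add: algebra_simps)
  have "sq_norm K u = 0"
  proof (rule ccontr)
    assume "sq_norm K u \<noteq> 0"
    then have R: "0 < sq_norm K u" using sq_norm_nonneg[of K u] by linarith
    define a where "a = \<bar>C\<bar> + 1"
    define b where "b = sq_norm K u / a"
    have Rab: "sq_norm K u = a * b" and "0 < b" using R by (simp_all add: a_def b_def)
    have "0 \<le> 2 * (- b) * sq_norm K u + (- b)\<^sup>2 * C" by (rule variation)
    also have "\<dots> = b\<^sup>2 * (C - 2 * a)"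
      unfolding Rab by (simp add: algebra_simps power2_eq_square)
    also have "\<dots> < 0"
      using \<open>0 < b\<close> by (intro mult_pos_neg) (auto simp: a_def)
    finally show False by simp
  qed
  then show ?thesis using fin unfolding sq_norm_eq_0_iff[OF fin] u_def m_def by simp
qed

lemma lambda_min_eq_rayleigh_minimum:
  fixes A :: "'k \<Rightarrow> 'k \<Rightarrow> real"
  assumes fin: "finite K" and sym: "\<forall>i\<in>K. \<forall>j\<in>K. A i j = A j i"
    and norm: "sq_norm K w0 = 1" and min: "\<And>w. quad_form K A w0 * sq_norm K w \<le> quad_form K A w"
  shows "lambda_min K A = quad_form K A w0"
  unfolding lambda_min_def
proof (rule cInf_eq_minimum)
  show "quad_form K A w0 \<in> eigenvalues_on K A"
    using rayleigh_minimizer_eigenvector[OF assms] norm sq_norm_pos_iff[OF fin, of w0]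
    unfolding eigenvalues_on_def by auto
next
  fix l assume "l \<in> eigenvalues_on K A"
  then obtain w where "\<exists>k\<in>K. w k \<noteq> 0" and eig: "\<forall>k\<in>K. (\<Sum>j\<in>K. A k j * w j) = l * w k"
    by (auto simp: eigenvalues_on_def)
  then have "0 < sq_norm K w" using fin by (simp add: sq_norm_pos_iff)
  then show "quad_form K A w0 \<le> l"
    using min[of w] quad_form_eigenvector[OF eig] by simp
qed

lemma lambda_min_le_rayleigh:
  fixes A :: "'k \<Rightarrow> 'k \<Rightarrow> real"
  assumes "finite K" "K \<noteq> {}" "\<forall>i\<in>K. \<forall>j\<in>K. A i j = A j i"
  shows "lambda_min K A * sq_norm K w \<le> quad_form K A w"
proof -
  obtain w0 where "sq_norm K w0 = 1" "\<And>w. quad_form K A w0 * sq_norm K w \<le> quad_form K A w"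
    using rayleigh_minimizer_exists[OF assms(1,2)] by blast
  then show ?thesis using lambda_min_eq_rayleigh_minimum[OF assms(1,3)] by simp
qed

lemma lambda_min_greatest:
  fixes A :: "'k \<Rightarrow> 'k \<Rightarrow> real"
  assumes "finite K" "K \<noteq> {}" "\<forall>i\<in>K. \<forall>j\<in>K. A i j = A j i"
    and "\<And>w. c * sq_norm K w \<le> quad_form K A w"
  shows "c \<le> lambda_min K A"
proof -
  obtain w0 where "sq_norm K w0 = 1" "\<And>w. quad_form K A w0 * sq_norm K w \<le> quad_form K A w"
    using rayleigh_minimizer_exists[OF assms(1,2)] by blast
  then show ?thesis using lambda_min_eq_rayleigh_minimum[OF assms(1,3)] assms(4)[of w0] by simp
qed

definition gram_matrix :: "'a measure \<Rightarrow> 'a set \<Rightarrow> ('k \<Rightarrow> 'a \<Rightarrow> real) \<Rightarrow> 'k \<Rightarrow> 'k \<Rightarrow> real" where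
  "gram_matrix N S g i j = (\<integral>z. indicator S z * (g i z * g j z) \<partial>N)"

lemma gram_eq_gram_matrix: "gram M x h = gram_matrix M (cball_inf x h) (\<lambda>\<nu> z. Phi x h z \<nu>)"
  by (simp add: gram_def gram_matrix_def fun_eq_iff)

lemma gram_matrix_sym: "gram_matrix N S g i j = gram_matrix N S g j i"
  by (simp add: gram_matrix_def mult.commute)

lemma quad_form_gram_matrix:
  fixes g :: "'k \<Rightarrow> 'a \<Rightarrow> real"
  assumes fin: "finite K" and S: "S \<in> sets N" "emeasure N S < \<infinity>"
    and meas: "\<And>i. i \<in> K \<Longrightarrow> g i \<in> borel_measurable N"
    and bound: "\<And>i z. i \<in> K \<Longrightarrow> z \<in> S \<Longrightarrow> \<bar>g i z\<bar> \<le> B"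
  shows "quad_form K (gram_matrix N S g) w = (\<integral>z. indicator S z * (\<Sum>i\<in>K. w i * g i z)\<^sup>2 \<partial>N)"
    and "integrable N (\<lambda>z. indicator S z * (\<Sum>i\<in>K. w i * g i z)\<^sup>2)"
proof -
  let ?e = "\<lambda>i j z. w i * (indicator S z * (g i z * g j z)) * w j"
  have entry: "integrable N (\<lambda>z. indicator S z * (g i z * g j z))" if "i \<in> K" "j \<in> K" for i j
  proof (rule integrableI_bounded_set[where A=S and B="B\<^sup>2"])
    have [measurable]: "g i \<in> borel_measurable N" "g j \<in> borel_measurable N"
      using meas that by auto
    show "(\<lambda>z. indicator S z * (g i z * g j z)) \<in> borel_measurable N"
      using S by measurable
    have "\<bar>g i z\<bar> * \<bar>g j z\<bar> \<le> B * B" if "z \<in> S" for z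
      using bound \<open>i \<in> K\<close> \<open>j \<in> K\<close> that by (intro mult_mono) (auto intro: order_trans[OF abs_ge_zero])
    then show "AE z in N. z \<in> S \<longrightarrow> norm (indicator S z * (g i z * g j z)) \<le> B\<^sup>2"
      by (auto simp: abs_mult power2_eq_square)
  qed (use S in auto)
  have square: "indicator S z * (\<Sum>i\<in>K. w i * g i z)\<^sup>2 = (\<Sum>i\<in>K. \<Sum>j\<in>K. ?e i j z)" for z
    by (simp add: power2_eq_square sum_distrib_left sum_distrib_right algebra_simps)
  have summand: "integrable N (?e i j)" if "i \<in> K" "j \<in> K" for i j
    using entry[OF that] by simp
  have row: "integrable N (\<lambda>z. \<Sum>j\<in>K. ?e i j z)" if "i \<in> K" for i
    using summand that by (intro Bochner_Integration.integrable_sum)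
  show "integrable N (\<lambda>z. indicator S z * (\<Sum>i\<in>K. w i * g i z)\<^sup>2)"
    unfolding square by (rule Bochner_Integration.integrable_sum) (rule row)
  have "(\<integral>z. indicator S z * (\<Sum>i\<in>K. w i * g i z)\<^sup>2 \<partial>N) = (\<Sum>i\<in>K. \<integral>z. (\<Sum>j\<in>K. ?e i j z) \<partial>N)"
    unfolding square by (rule Bochner_Integration.integral_sum) (rule row)
  also have "\<dots> = (\<Sum>i\<in>K. \<Sum>j\<in>K. \<integral>z. ?e i j z \<partial>N)"
    by (intro sum.cong refl Bochner_Integration.integral_sum summand)
  finally show "quad_form K (gram_matrix N S g) w = (\<integral>z. indicator S z * (\<Sum>i\<in>K. w i * g i z)\<^sup>2 \<partial>N)"
    by (simp add: quad_form_def gram_matrix_def)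
qed

lemma quad_form_gram_matrix_nonneg:
  fixes g :: "'k \<Rightarrow> 'a \<Rightarrow> real"
  assumes "finite K" "S \<in> sets N" "emeasure N S < \<infinity>"
    and "\<And>i. i \<in> K \<Longrightarrow> g i \<in> borel_measurable N"
    and "\<And>i z. i \<in> K \<Longrightarrow> z \<in> S \<Longrightarrow> \<bar>g i z\<bar> \<le> B"
  shows "0 \<le> quad_form K (gram_matrix N S g) w"
proof -
  have "0 \<le> (\<integral>z. indicator S z * (\<Sum>i\<in>K. w i * g i z)\<^sup>2 \<partial>N)"
    by (intro integral_nonneg_AE) auto
  then show ?thesis using quad_form_gram_matrix(1)[OF assms] by simp
qed

lemma nn_integral_quad_form_gram_matrix:
  fixes g :: "'k \<Rightarrow> 'a \<Rightarrow> real"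
  assumes "finite K" "S \<in> sets N" "emeasure N S < \<infinity>"
    and "\<And>i. i \<in> K \<Longrightarrow> g i \<in> borel_measurable N"
    and "\<And>i z. i \<in> K \<Longrightarrow> z \<in> S \<Longrightarrow> \<bar>g i z\<bar> \<le> B"
  shows "ennreal (quad_form K (gram_matrix N S g) w)
    = (\<integral>\<^sup>+ z. indicator S z * ennreal ((\<Sum>i\<in>K. w i * g i z)\<^sup>2) \<partial>N)"
proof -
  have "(\<integral>\<^sup>+ z. indicator S z * ennreal ((\<Sum>i\<in>K. w i * g i z)\<^sup>2) \<partial>N)
      = (\<integral>\<^sup>+ z. ennreal (indicator S z * (\<Sum>i\<in>K. w i * g i z)\<^sup>2) \<partial>N)"
    by (intro nn_integral_cong) (simp add: indicator_def)
  also have "\<dots> = ennreal (\<integral>z. indicator S z * (\<Sum>i\<in>K. w i * g i z)\<^sup>2 \<partial>N)"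
    using quad_form_gram_matrix(2)[OF assms] by (intro nn_integral_eq_integral) auto
  finally show ?thesis by (simp add: quad_form_gram_matrix(1)[OF assms])
qed

lemma lambda_min_gram_matrix_nonneg:
  fixes g :: "'k \<Rightarrow> 'a \<Rightarrow> real"
  assumes "finite K" "K \<noteq> {}" "S \<in> sets N" "emeasure N S < \<infinity>"
    and "\<And>i. i \<in> K \<Longrightarrow> g i \<in> borel_measurable N"
    and "\<And>i z. i \<in> K \<Longrightarrow> z \<in> S \<Longrightarrow> \<bar>g i z\<bar> \<le> B"
  shows "0 \<le> lambda_min K (gram_matrix N S g)"
  using assms quad_form_gram_matrix_nonneg[OF assms(1,3-6)]
  by (intro lambda_min_greatest) (auto intro: gram_matrix_sym)

lemma cball_inf_eq_cbox: "cball_inf x r = cbox (\<chi> i. x$i - r) (\<chi> i. x$i + r)"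
  unfolding cball_inf_def mem_box_cart set_eq_iff by (simp add: abs_diff_le_iff)

lemma ball_inf_eq_box: "ball_inf x r = box (\<chi> i. x$i - r) (\<chi> i. x$i + r)"
  unfolding ball_inf_def mem_box_cart set_eq_iff by (simp add: abs_diff_less_iff)

lemma cball_inf_borel [measurable]: "cball_inf x r \<in> sets borel"
  by (simp add: cball_inf_eq_cbox)

lemma ball_inf_borel [measurable]: "ball_inf x r \<in> sets borel"
  by (simp add: ball_inf_eq_box)

lemma emeasure_lborel_cball_inf:
  fixes x :: "real^'n"
  assumes "0 \<le> r"
  shows "emeasure lborel (cball_inf x r) = ennreal ((2 * r) ^ CARD('n))"
proof -
  have "((\<chi> i. x$i + r) - (\<chi> i. x$i - r)) \<bullet> b = 2 * r" if "b \<in> Basis" for b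
    using that by (auto simp: Basis_vec_def inner_axis)
  then have "(\<Prod>b\<in>Basis. ((\<chi> i. x$i + r) - (\<chi> i. x$i - r)) \<bullet> b) = (2 * r) ^ CARD('n)"
    by simp
  then show ?thesis
    using assms by (simp add: cball_inf_eq_cbox emeasure_lborel_cbox_eq Basis_vec_def inner_axis)
qed

lemma emeasure_lborel_ball_inf:
  fixes x :: "real^'n"
  assumes "0 \<le> r"
  shows "emeasure lborel (ball_inf x r) = ennreal ((2 * r) ^ CARD('n))"
proof -
  have "emeasure lborel (ball_inf x r) = emeasure lborel (cball_inf x r)"
    using assms by (simp add: ball_inf_eq_box cball_inf_eq_cbox emeasure_lborel_box_eq
        emeasure_lborel_cbox_eq)
  then show ?thesis using emeasure_lborel_cball_inf[OF assms] by simp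
qed

lemma cball_inf_mono: "r \<le> s \<Longrightarrow> cball_inf x r \<subseteq> cball_inf x s"
  unfolding cball_inf_def by (auto intro: order_trans)

lemma center_in_ball_inf: "0 < t \<Longrightarrow> y \<in> ball_inf y t"
  by (simp add: ball_inf_def)

lemma ball_inf_subset_cball_inf:
  assumes "y \<in> cball_inf x r"
  shows "ball_inf y s \<subseteq> cball_inf x (r + s)"
proof
  fix z assume "z \<in> ball_inf y s"
  then have bounds: "\<bar>z$i - y$i\<bar> < s" "\<bar>y$i - x$i\<bar> \<le> r" for i
    using assms by (auto simp: ball_inf_def cball_inf_def)
  have "\<bar>z$i - x$i\<bar> \<le> r + s" for i
    using bounds[of i] unfolding abs_diff_le_iff abs_diff_less_iff by (elim conjE, intro conjI) linarith+
  then show "z \<in> cball_inf x (r + s)" by (simp add: cball_inf_def)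
qed

lemma cball_inf_subset_ball_inf:
  assumes "y \<in> cball_inf x r" "r + h < t"
  shows "cball_inf x h \<subseteq> ball_inf y t"
proof
  fix z assume "z \<in> cball_inf x h"
  then have bounds: "\<bar>z$i - x$i\<bar> \<le> h" "\<bar>y$i - x$i\<bar> \<le> r" for i
    using assms by (auto simp: cball_inf_def)
  have "\<bar>z$i - y$i\<bar> < t" for i
    using bounds[of i] assms(2) unfolding abs_diff_le_iff abs_diff_less_iff by (elim conjE, intro conjI) linarith+
  then show "z \<in> ball_inf y t" by (simp add: ball_inf_def)
qed

lemma Phi_borel_measurable [measurable]: "(\<lambda>z. Phi x h z \<nu>) \<in> borel_measurable borel"
  unfolding Phi_def by measurable

lemma abs_Phi_le_1: "z \<in> cball_inf x h \<Longrightarrow> 0 < h \<Longrightarrow> \<bar>Phi x h z \<nu>\<bar> \<le> 1"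
  unfolding Phi_def cball_inf_def
  by (auto simp: abs_prod power_abs intro!: prod_le_1 power_le_one simp: abs_divide divide_le_eq_1)

lemma Phi_rescale: "h \<noteq> 0 \<Longrightarrow> Phi x h (x + h *\<^sub>R u) \<nu> = Phi 0 1 u \<nu>"
  by (simp add: Phi_def)

lemma finite_multi_idx: "finite (multi_idx \<beta> :: ('n::finite \<Rightarrow> nat) set)"
proof (rule finite_subset)
  show "multi_idx \<beta> \<subseteq> PiE UNIV (\<lambda>_::'n. {..nat (\<lceil>\<beta>\<rceil> - 1)})"
  proof
    fix \<nu> :: "'n \<Rightarrow> nat" assume "\<nu> \<in> multi_idx \<beta>"
    then have sum_le: "int (\<Sum>j\<in>UNIV. \<nu> j) \<le> \<lceil>\<beta>\<rceil> - 1" by (simp add: multi_idx_def)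
    have "\<nu> i \<le> nat (\<lceil>\<beta>\<rceil> - 1)" for i
    proof -
      have "\<nu> i \<le> (\<Sum>j\<in>UNIV. \<nu> j)" by (rule member_le_sum) auto
      then show ?thesis using sum_le by linarith
    qed
    then show "\<nu> \<in> PiE UNIV (\<lambda>_. {..nat (\<lceil>\<beta>\<rceil> - 1)})" by auto
  qed
qed (simp add: finite_PiE)

lemma zero_in_multi_idx: "0 < \<beta> \<Longrightarrow> (\<lambda>_. 0) \<in> multi_idx \<beta>"
  by (simp add: multi_idx_def)

lemma multi_idx_le_1:
  assumes "0 < \<beta>" "\<beta> \<le> 1"
  shows "multi_idx \<beta> = {\<lambda>_. 0}"
proof -
  have "\<lceil>\<beta>\<rceil> = 1" using assms by linarith
  then have "\<nu> \<in> multi_idx \<beta> \<longleftrightarrow> (\<Sum>j\<in>UNIV. \<nu> j) = 0" for \<nu> :: "'a \<Rightarrow> nat"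
    by (simp add: multi_idx_def del: of_nat_sum)
  then show ?thesis by (auto simp: fun_eq_iff)
qed

lemma nn_integral_lborel_rescale:
  fixes x :: "real^'n" and g :: "real^'n \<Rightarrow> ennreal"
  assumes "0 < h" and [measurable]: "g \<in> borel_measurable borel"
  shows "(\<integral>\<^sup>+ z. g z \<partial>lborel) = ennreal (h ^ CARD('n)) * (\<integral>\<^sup>+ u. g (x + h *\<^sub>R u) \<partial>lborel)"
  using assms
  by (subst lborel_affine[of h x]) (simp_all add: nn_integral_density nn_integral_distr nn_integral_cmult)

lemma vimage_rescale_borel [measurable]:
  fixes x :: "'a::euclidean_space"
  shows "L \<in> sets borel \<Longrightarrow> (\<lambda>u. x + h *\<^sub>R u) -` L \<in> sets borel"
  using measurable_sets[of "\<lambda>u::'a. x + h *\<^sub>R u" borel borel L] by simp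

lemma emeasure_lborel_rescale:
  fixes x :: "real^'n"
  assumes "0 < h" and [measurable]: "L \<in> sets borel"
  shows "emeasure lborel L = ennreal (h ^ CARD('n)) * emeasure lborel ((\<lambda>u. x + h *\<^sub>R u) -` L)"
proof -
  have "(\<lambda>u. indicator L (x + h *\<^sub>R u)) = (indicator ((\<lambda>u. x + h *\<^sub>R u) -` L) :: _ \<Rightarrow> ennreal)"
    by (simp add: fun_eq_iff indicator_def)
  then have "(\<integral>\<^sup>+ u. indicator L (x + h *\<^sub>R u) \<partial>lborel) = emeasure lborel ((\<lambda>u. x + h *\<^sub>R u) -` L)"
    by simp
  moreover have "emeasure lborel L = (\<integral>\<^sup>+ z. indicator L z \<partial>lborel)"
    by simp
  ultimately show ?thesis
    using nn_integral_lborel_rescale[OF assms(1), of "indicator L" x] by simp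
qed

lemma emeasure_lebesgue_borel:
  assumes "A \<in> sets borel"
  shows "emeasure lebesgue A = emeasure lborel A"
proof -
  have "emeasure lebesgue A = (\<integral>\<^sup>+ z. indicator A z \<partial>lebesgue)"
    using assms by (simp add: nn_integral_indicator)
  also have "\<dots> = (\<integral>\<^sup>+ z. indicator A z \<partial>lborel)" by (rule nn_integral_completion)
  also have "\<dots> = emeasure lborel A" using assms by (simp add: nn_integral_indicator)
  finally show ?thesis .
qed

lemma emeasure_lebesgue_vimage_rescale_ge:
  fixes x :: "real^'n"
  assumes "0 < h" "L \<in> sets borel" "ennreal (h ^ CARD('n) * a) \<le> emeasure lborel L" "0 \<le> a"
  shows "ennreal a \<le> emeasure lebesgue ((\<lambda>u. x + h *\<^sub>R u) -` L)"
proof -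
  have "ennreal (h ^ CARD('n)) * ennreal a = ennreal (h ^ CARD('n) * a)"
    using assms by (intro ennreal_mult[symmetric]) auto
  also have "\<dots> \<le> emeasure lborel L" by (fact assms(3))
  also have "\<dots> = ennreal (h ^ CARD('n)) * emeasure lborel ((\<lambda>u. x + h *\<^sub>R u) -` L)"
    by (rule emeasure_lborel_rescale[OF assms(1,2)])
  finally show ?thesis
    using assms by (simp add: emeasure_lebesgue_borel ennreal_mult_le_mult_iff)
qed

lemma reg_setD:
  "y \<in> reg_set v M f \<Longrightarrow> 0 < s \<Longrightarrow> s < 1 \<Longrightarrow>
    ennreal (v * s ^ CARD('n)) * (SUP z\<in>ball_inf y ((1 + v) * s). ennreal (f z))
      \<le> emeasure M (ball_inf (y :: real^'n) s)"
  by (auto simp: reg_set_def)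

lemma reg_set_density_bound:
  fixes M :: "(real^'n) measure"
  assumes y: "y \<in> reg_set v M f" and s: "0 < s" "s < 1" and v: "0 < v"
    and fin: "emeasure M (ball_inf y s) \<noteq> \<top>"
  obtains F where "\<And>z. z \<in> ball_inf y ((1 + v) * s) \<Longrightarrow> f z \<le> F"
    and "ennreal (v * s ^ CARD('n) * F) \<le> emeasure M (ball_inf y s)"
proof -
  define S where "S = (SUP z\<in>ball_inf y ((1 + v) * s). ennreal (f z))"
  have bound: "ennreal (v * s ^ CARD('n)) * S \<le> emeasure M (ball_inf y s)"
    using reg_setD[OF y s] by (simp add: S_def)
  have "S \<noteq> \<infinity>"
  proof
    assume "S = \<infinity>"
    then have "ennreal (v * s ^ CARD('n)) * S = \<infinity>"
      using v s by (simp add: ennreal_mult_top)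
    then show False using bound fin by (simp add: top_unique)
  qed
  then have S_eq: "S = ennreal (enn2real S)" by (simp add: less_top[symmetric])
  show ?thesis
  proof
    fix z assume "z \<in> ball_inf y ((1 + v) * s)"
    then have "ennreal (f z) \<le> S" unfolding S_def by (rule SUP_upper)
    then show "f z \<le> enn2real S"
      using enn2real_nonneg[of S] by (subst (asm) S_eq) (simp add: ennreal_le_iff)
  next
    show "ennreal (v * s ^ CARD('n) * enn2real S) \<le> emeasure M (ball_inf y s)"
      using bound v s S_eq by (simp add: ennreal_mult)
  qed
qed

lemma measure_cball_inf_ge_of_reg_set:
  fixes M :: "(real^'n) measure"
  assumes M: "finite_measure M" "cball_inf x h \<in> sets M"
    and y: "y \<in> reg_set v M f" "y \<in> cball_inf x r" "\<xi> \<le> f y" and "0 < v" "0 \<le> \<xi>"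
    and h: "0 < h" "h \<le> 1" "2 * r \<le> h"
  shows "v * \<xi> * (h / 2) ^ CARD('n) \<le> measure M (cball_inf x h)"
proof -
  have "y \<in> ball_inf y ((1 + v) * (h / 2))"
    using assms by (intro center_in_ball_inf) simp
  then have "ennreal (v * (h / 2) ^ CARD('n)) * ennreal \<xi>
      \<le> ennreal (v * (h / 2) ^ CARD('n)) * (SUP z\<in>ball_inf y ((1 + v) * (h / 2)). ennreal (f z))"
    using y(3) by (intro mult_left_mono SUP_upper2[of y] ennreal_leI) auto
  also have "\<dots> \<le> emeasure M (ball_inf y (h / 2))"
    by (rule reg_setD[OF y(1)]) (use h in auto)
  also have "\<dots> \<le> emeasure M (cball_inf x h)"
  proof (rule emeasure_mono)
    have "cball_inf x (r + h / 2) \<subseteq> cball_inf x h"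
      using h by (intro cball_inf_mono) simp
    then show "ball_inf y (h / 2) \<subseteq> cball_inf x h"
      using ball_inf_subset_cball_inf[OF y(2)] by blast
  qed (fact M(2))
  finally show ?thesis
    using assms by (simp add: finite_measure.emeasure_eq_measure ennreal_mult[symmetric] ennreal_le_iff
        mult_ac)
qed

lemma emeasure_density_le_sup:
  assumes [measurable]: "f \<in> borel_measurable borel" "S \<in> sets borel"
    and "\<And>z. z \<in> S \<Longrightarrow> f z \<le> F"
  shows "emeasure (density lborel (\<lambda>z. ennreal (f z))) S \<le> ennreal F * emeasure lborel S"
proof -
  have "emeasure (density lborel (\<lambda>z. ennreal (f z))) S = (\<integral>\<^sup>+ z. ennreal (f z) * indicator S z \<partial>lborel)"
    by (simp add: emeasure_density)
  also have "\<dots> \<le> (\<integral>\<^sup>+ z. ennreal F * indicator S z \<partial>lborel)"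
    using assms(3) by (intro nn_integral_mono) (auto simp: indicator_def ennreal_leI)
  finally show ?thesis by (simp add: nn_integral_cmult_indicator)
qed

lemma emeasure_density_le_level_set:
  assumes [measurable]: "f \<in> borel_measurable borel" "B \<in> sets borel"
    and bound: "\<And>z. z \<in> B \<Longrightarrow> f z \<le> F" and "0 \<le> \<theta>"
  shows "emeasure (density lborel (\<lambda>z. ennreal (f z))) B
    \<le> ennreal F * emeasure lborel {z \<in> B. \<theta> \<le> f z} + ennreal \<theta> * emeasure lborel B"
proof -
  let ?L = "{z \<in> B. \<theta> \<le> f z}"
  have "emeasure (density lborel (\<lambda>z. ennreal (f z))) B = (\<integral>\<^sup>+ z. ennreal (f z) * indicator B z \<partial>lborel)"
    by (simp add: emeasure_density)
  also have "\<dots> \<le> (\<integral>\<^sup>+ z. ennreal F * indicator ?L z + ennreal \<theta> * indicator B z \<partial>lborel)"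
  proof (rule nn_integral_mono)
    fix z
    consider "z \<in> ?L" | "z \<in> B - ?L" | "z \<notin> B" by blast
    then show "ennreal (f z) * indicator B z \<le> ennreal F * indicator ?L z + ennreal \<theta> * indicator B z"
    proof cases
      case 1
      then have "ennreal (f z) \<le> ennreal F" using bound by (auto intro: ennreal_leI)
      then show ?thesis using 1 by (simp add: add_increasing2)
    next
      case 2
      then show ?thesis by (auto intro: ennreal_leI)
    qed simp
  qed
  also have "\<dots> = ennreal F * emeasure lborel ?L + ennreal \<theta> * emeasure lborel B"
    by (simp add: nn_integral_add nn_integral_cmult_indicator)
  finally show ?thesis .
qed

lemma measure_level_set_ge:
  assumes [measurable]: "f \<in> borel_measurable borel" "B \<in> sets borel"
    and bound: "\<And>z. z \<in> B \<Longrightarrow> f z \<le> F" and "0 < F" "0 \<le> \<theta>" "emeasure lborel B < \<infinity>"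
    and mass: "ennreal m \<le> emeasure (density lborel (\<lambda>z. ennreal (f z))) B"
  shows "m - \<theta> * measure lborel B \<le> F * measure lborel {z \<in> B. \<theta> \<le> f z}"
proof -
  let ?L = "{z \<in> B. \<theta> \<le> f z}"
  have "emeasure lborel ?L \<le> emeasure lborel B" by (intro emeasure_mono) auto
  then have fin: "emeasure lborel ?L = ennreal (measure lborel ?L)"
    "emeasure lborel B = ennreal (measure lborel B)"
    using assms(6) by (auto intro!: emeasure_eq_ennreal_measure simp: top_unique)
  have "ennreal m \<le> ennreal F * emeasure lborel ?L + ennreal \<theta> * emeasure lborel B"
    using mass emeasure_density_le_level_set[OF assms(1-3,5)] by (rule order_trans)
  also have "\<dots> = ennreal (F * measure lborel ?L + \<theta> * measure lborel B)"
    using assms(4,5) by (simp add: fin ennreal_mult ennreal_plus)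
  finally have "m \<le> F * measure lborel ?L + \<theta> * measure lborel B"
    using assms(4,5) by (subst (asm) ennreal_le_iff) auto
  then show ?thesis by linarith
qed

lemma vimage_rescale_cball_inf:
  fixes x :: "real^'n"
  assumes "0 < h"
  shows "(\<lambda>u. x + h *\<^sub>R u) -` cball_inf x h = cball_inf 0 1"
  using assms by (simp add: cball_inf_def abs_mult)

lemma vimage_rescale_subset_cball_inf:
  fixes x :: "real^'n"
  assumes "0 < h" "L \<subseteq> cball_inf x h"
  shows "(\<lambda>u. x + h *\<^sub>R u) -` L \<subseteq> cball_inf 0 1"
proof -
  have "(\<lambda>u. x + h *\<^sub>R u) -` L \<subseteq> (\<lambda>u. x + h *\<^sub>R u) -` cball_inf x h" using assms(2) by blast
  also have "\<dots> = cball_inf 0 1" by (rule vimage_rescale_cball_inf[OF assms(1)])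
  finally show ?thesis .
qed

lemma emeasure_lebesgue_subset_cball_inf_finite:
  fixes K :: "(real^'n) set"
  assumes "K \<in> sets lebesgue" "K \<subseteq> cball_inf x r" "0 \<le> r"
  shows "emeasure lebesgue K < \<infinity>"
proof -
  have "emeasure lebesgue K \<le> emeasure lebesgue (cball_inf x r)"
    using assms by (intro emeasure_mono) auto
  also have "\<dots> < \<infinity>"
    using assms(3) by (simp add: emeasure_lebesgue_borel emeasure_lborel_cball_inf)
  finally show ?thesis .
qed

lemma Phi_lebesgue_measurable: "(\<lambda>z. Phi x h z \<nu>) \<in> borel_measurable lebesgue"
  by (rule measurable_completion) (simp add: measurable_lborel1)

lemma nn_integral_density_ge_rescaled_level_set:
  fixes x :: "real^'n" and g :: "real^'n \<Rightarrow> ennreal"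
  assumes [measurable]: "f \<in> borel_measurable borel" "g \<in> borel_measurable borel"
    "L \<in> sets borel" "C \<in> sets borel"
    and h: "0 < h" and "L \<subseteq> C" and level: "\<And>z. z \<in> L \<Longrightarrow> \<theta> \<le> f z"
  shows "ennreal (h ^ CARD('n)) * ennreal \<theta> *
      (\<integral>\<^sup>+ u. indicator ((\<lambda>u. x + h *\<^sub>R u) -` L) u * g (x + h *\<^sub>R u) \<partial>lborel)
    \<le> (\<integral>\<^sup>+ z. indicator C z * g z \<partial>density lborel (\<lambda>z. ennreal (f z)))"
proof -
  have "(\<lambda>u. indicator ((\<lambda>u. x + h *\<^sub>R u) -` L) u * g (x + h *\<^sub>R u))
      = (\<lambda>u. indicator L (x + h *\<^sub>R u) * g (x + h *\<^sub>R u))"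
    by (simp add: fun_eq_iff indicator_def)
  then have "ennreal (h ^ CARD('n)) *
      (\<integral>\<^sup>+ u. indicator ((\<lambda>u. x + h *\<^sub>R u) -` L) u * g (x + h *\<^sub>R u) \<partial>lborel)
      = (\<integral>\<^sup>+ z. indicator L z * g z \<partial>lborel)"
    using nn_integral_lborel_rescale[OF h, of "\<lambda>z. indicator L z * g z" x] by simp
  also have "ennreal \<theta> * \<dots> = (\<integral>\<^sup>+ z. ennreal \<theta> * (indicator L z * g z) \<partial>lborel)"
    by (simp add: nn_integral_cmult)
  also have "\<dots> \<le> (\<integral>\<^sup>+ z. ennreal (f z) * (indicator C z * g z) \<partial>lborel)"
    using level \<open>L \<subseteq> C\<close> by (intro nn_integral_mono) (auto simp: indicator_def intro!: mult_right_mono ennreal_leI)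
  also have "\<dots> = (\<integral>\<^sup>+ z. indicator C z * g z \<partial>density lborel (\<lambda>z. ennreal (f z)))"
    by (simp add: nn_integral_density)
  finally show ?thesis by (simp add: ac_simps)
qed

lemma quad_form_gram_ge_level_set:
  fixes x :: "real^'n" and f :: "real^'n \<Rightarrow> real"
  assumes [measurable]: "f \<in> borel_measurable borel" "L \<in> sets borel"
    and M: "M = density lborel (\<lambda>z. ennreal (f z))" and fin: "emeasure M (cball_inf x h) < \<infinity>"
    and K: "finite K" and h: "0 < h" and "0 \<le> \<theta>" and L: "L \<subseteq> cball_inf x h"
    and level: "\<And>z. z \<in> L \<Longrightarrow> \<theta> \<le> f z"
  shows "h ^ CARD('n) * \<theta> *
      quad_form K (gram_matrix lebesgue ((\<lambda>u. x + h *\<^sub>R u) -` L) (\<lambda>\<nu> z. Phi 0 1 z \<nu>)) w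
    \<le> quad_form K (gram M x h) w"
proof -
  let ?C = "cball_inf x h" and ?L' = "(\<lambda>u. x + h *\<^sub>R u) -` L"
  let ?G = "gram_matrix lebesgue ?L' (\<lambda>\<nu> z. Phi 0 1 z \<nu>)"
  define P where "P z = (\<Sum>i\<in>K. w i * Phi x h z i)" for z
  have [measurable]: "P \<in> borel_measurable borel" unfolding P_def by measurable
  have L': "?L' \<in> sets lebesgue" "?L' \<subseteq> cball_inf 0 1"
    using vimage_rescale_subset_cball_inf[OF h L] by auto
  have "sets M = sets borel" using M by simp
  then have C: "?C \<in> sets M" and Phi_M: "\<And>\<nu>. (\<lambda>z. Phi x h z \<nu>) \<in> borel_measurable M"
    using measurable_cong_sets[of M borel borel borel] by auto
  have "\<bar>Phi 0 1 z \<nu>\<bar> \<le> 1" if "z \<in> ?L'" for z \<nu>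
    using L'(2) that abs_Phi_le_1[of z 0 1] by auto
  note gram_L'_props = K L'(1) emeasure_lebesgue_subset_cball_inf_finite[OF L' zero_le_one]
    Phi_lebesgue_measurable this
  have "\<bar>Phi x h z \<nu>\<bar> \<le> 1" if "z \<in> ?C" for z \<nu>
    using that h by (rule abs_Phi_le_1)
  note gram_M_props = K C fin Phi_M this
  have "ennreal (h ^ CARD('n)) * ennreal \<theta> * ennreal (quad_form K ?G w)
    = ennreal (h ^ CARD('n)) * ennreal \<theta> *
      (\<integral>\<^sup>+ u. indicator ?L' u * ennreal ((P (x + h *\<^sub>R u))\<^sup>2) \<partial>lborel)"
    using nn_integral_quad_form_gram_matrix[where g="\<lambda>\<nu> z. Phi 0 1 z \<nu>" and B=1, OF gram_L'_props] h
    by (simp add: P_def Phi_rescale nn_integral_completion)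
  also have "\<dots> \<le> (\<integral>\<^sup>+ z. indicator ?C z * ennreal ((P z)\<^sup>2) \<partial>M)"
    unfolding M using L level h by (intro nn_integral_density_ge_rescaled_level_set) auto
  also have "\<dots> = ennreal (quad_form K (gram M x h) w)"
    using nn_integral_quad_form_gram_matrix[where g="\<lambda>\<nu> z. Phi x h z \<nu>" and B=1, OF gram_M_props]
    by (simp add: gram_eq_gram_matrix P_def)
  finally have "ennreal (h ^ CARD('n)) * ennreal \<theta> * ennreal (quad_form K ?G w)
    \<le> ennreal (quad_form K (gram M x h) w)" .
  moreover have "0 \<le> quad_form K ?G w"
    by (rule quad_form_gram_matrix_nonneg[where B=1, OF gram_L'_props])
  moreover have "0 \<le> quad_form K (gram M x h) w"
    unfolding gram_eq_gram_matrix by (rule quad_form_gram_matrix_nonneg[where B=1, OF gram_M_props])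
  ultimately show ?thesis
    using h \<open>0 \<le> \<theta>\<close> by (simp add: ennreal_mult[symmetric] ennreal_le_iff)
qed

lemma lambda_min_gram_ge_level_set:
  fixes x :: "real^'n" and f :: "real^'n \<Rightarrow> real"
  assumes "f \<in> borel_measurable borel" "L \<in> sets borel"
    and "M = density lborel (\<lambda>z. ennreal (f z))" "emeasure M (cball_inf x h) < \<infinity>"
    and "0 < \<beta>" "0 < h" "0 \<le> \<theta>" "L \<subseteq> cball_inf x h" "\<And>z. z \<in> L \<Longrightarrow> \<theta> \<le> f z"
  shows "h ^ CARD('n) * \<theta> *
      lambda_min (multi_idx \<beta>) (gram_matrix lebesgue ((\<lambda>u. x + h *\<^sub>R u) -` L) (\<lambda>\<nu> z. Phi 0 1 z \<nu>))
    \<le> lambda_min (multi_idx \<beta>) (gram M x h)"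
proof (rule lambda_min_greatest)
  let ?K = "multi_idx \<beta> :: ('n \<Rightarrow> nat) set"
  let ?G = "gram_matrix lebesgue ((\<lambda>u. x + h *\<^sub>R u) -` L) (\<lambda>\<nu> z. Phi 0 1 z \<nu>)"
  show K: "finite ?K" "?K \<noteq> {}"
    using finite_multi_idx zero_in_multi_idx[OF \<open>0 < \<beta>\<close>] by auto
  show "\<forall>i\<in>?K. \<forall>j\<in>?K. gram M x h i j = gram M x h j i"
    by (simp add: gram_eq_gram_matrix gram_matrix_sym)
  fix w
  have "lambda_min ?K ?G * sq_norm ?K w \<le> quad_form ?K ?G w"
    using K by (intro lambda_min_le_rayleigh) (auto intro: gram_matrix_sym)
  then have "h ^ CARD('n) * \<theta> * (lambda_min ?K ?G * sq_norm ?K w)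
      \<le> h ^ CARD('n) * \<theta> * quad_form ?K ?G w"
    using assms by (intro mult_left_mono) auto
  also have "\<dots> \<le> quad_form ?K (gram M x h) w"
    using assms K by (intro quad_form_gram_ge_level_set) auto
  finally show "h ^ CARD('n) * \<theta> * lambda_min ?K ?G * sq_norm ?K w \<le> quad_form ?K (gram M x h) w"
    by (simp add: mult.assoc)
qed

lemma divide_le_self: "0 \<le> x \<Longrightarrow> 1 \<le> y \<Longrightarrow> x / y \<le> (x::real)"
  using divide_left_mono[of 1 y x] by simp

lemma divide_two_power_le_1:
  assumes "0 < v" "v < 1"
  shows "v / 2 ^ n \<le> (1::real)"
  by (rule order_trans[OF divide_le_self]) (use assms in auto)

lemma lambda_min_Phi_gram_nonneg:
  fixes K :: "(real^'n) set"
  assumes "0 < \<beta>" "K \<in> sets lebesgue" "K \<subseteq> cball_inf 0 1"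
  shows "0 \<le> lambda_min (multi_idx \<beta> :: ('n \<Rightarrow> nat) set) (gram_matrix lebesgue K (\<lambda>\<nu> z. Phi 0 1 z \<nu>))"
proof (rule lambda_min_gram_matrix_nonneg)
  show "\<bar>Phi 0 1 z \<nu>\<bar> \<le> 1" if "z \<in> K" for z \<nu>
    using that assms abs_Phi_le_1[of z 0 1] by auto
qed (use assms finite_multi_idx zero_in_multi_idx[OF assms(1)] Phi_lebesgue_measurable
      emeasure_lebesgue_subset_cball_inf_finite[OF assms(2,3)] in auto)

lemma c_min_eq:
  "c_min TYPE('n) \<beta> a = min 1 (Inf {lambda_min (multi_idx \<beta> :: ('n \<Rightarrow> nat) set)
      (gram_matrix lebesgue K (\<lambda>\<nu> z. Phi 0 1 z \<nu>)) | K.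
      K \<in> sets lebesgue \<and> K \<subseteq> cball_inf (0::real^'n::finite) 1 \<and> ennreal a \<le> emeasure lebesgue K})"
  unfolding c_min_def gram_matrix_def[abs_def] ..

lemma c_min_le_1: "c_min TYPE('n::finite) \<beta> a \<le> 1"
  by (simp add: c_min_def)

lemma c_min_le_lambda_min:
  fixes K :: "(real^'n) set"
  assumes "0 < \<beta>" "K \<in> sets lebesgue" "K \<subseteq> cball_inf 0 1" "ennreal a \<le> emeasure lebesgue K"
  shows "c_min TYPE('n) \<beta> a
    \<le> lambda_min (multi_idx \<beta> :: ('n \<Rightarrow> nat) set) (gram_matrix lebesgue K (\<lambda>\<nu> z. Phi 0 1 z \<nu>))"
  unfolding c_min_eq using assms lambda_min_Phi_gram_nonneg[OF assms(1)]
  by (intro min.coboundedI2 cInf_lower) (auto simp: bdd_below_def)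

lemma c_min_nonneg:
  assumes "0 < \<beta>" "a \<le> 1"
  shows "0 \<le> c_min TYPE('n::finite) \<beta> a"
proof -
  have "a \<le> 2 ^ CARD('n)" by (rule order_trans[OF assms(2)]) (rule one_le_power, simp)
  moreover have "emeasure lebesgue (cball_inf (0::real^'n) 1) = ennreal (2 ^ CARD('n))"
    by (simp add: emeasure_lebesgue_borel emeasure_lborel_cball_inf)
  ultimately have "cball_inf (0::real^'n) 1 \<in> sets lebesgue \<and> cball_inf (0::real^'n) 1 \<subseteq> cball_inf 0 1
      \<and> ennreal a \<le> emeasure lebesgue (cball_inf (0::real^'n) 1)"
    by (auto intro: ennreal_leI)
  then show ?thesis
    unfolding c_min_eq using lambda_min_Phi_gram_nonneg[OF assms(1)]
    by (intro min.boundedI cInf_greatest) auto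
qed

lemma balls_around_cball_inf:
  assumes y: "y \<in> cball_inf x r" and "v < 1" "0 < r" "3 * r \<le> v * h"
  shows "ball_inf y (h - r) \<subseteq> cball_inf x h" "cball_inf x h \<subseteq> ball_inf y ((1 + v) * (h - r))"
proof -
  show "ball_inf y (h - r) \<subseteq> cball_inf x h"
    using ball_inf_subset_cball_inf[OF y, of "h - r"] by simp
  have "v * r < r" using assms by simp
  moreover have "(1 + v) * (h - r) = h - r + v * h - v * r" by (simp add: algebra_simps)
  ultimately have "r + h < (1 + v) * (h - r)" using assms by linarith
  then show "cball_inf x h \<subseteq> ball_inf y ((1 + v) * (h - r))"
    by (rule cball_inf_subset_ball_inf[OF y])
qed

text \<open>The ball \<open>ball_inf y (h - r)\<close> lies inside the cube and carries mass \<open>\<ge> v (h - r)^d F\<close>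
  by regularity, while \<open>f \<le> F\<close> there; so at least half of that mass sits where \<open>f \<ge> v F / 2^(d+1)\<close>.\<close>

lemma large_level_set_in_cball_inf:
  fixes M :: "(real^'n) measure" and f :: "real^'n \<Rightarrow> real"
  assumes [measurable]: "f \<in> borel_measurable borel"
    and M: "M = density lborel (\<lambda>z. ennreal (f z))" and fin: "finite_measure M"
    and v: "0 < v" "v < 1" and r: "0 < r" "2 * r \<le> h" "h \<le> 1" "3 * r \<le> v * h"
    and y: "y \<in> cball_inf x r" "y \<in> reg_set v M f" "0 < f y"
  obtains F L where "0 < F" "measure M (cball_inf x h) \<le> F * (2 * h) ^ CARD('n)"
    "L \<in> sets borel" "L \<subseteq> cball_inf x h" "\<And>z. z \<in> L \<Longrightarrow> v * F / 2 ^ (CARD('n) + 1) \<le> f z"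
    "ennreal (h ^ CARD('n) * (v / 2 ^ (CARD('n) + 1))) \<le> emeasure lborel L"
proof -
  note emeasure_eq_measure = finite_measure.emeasure_eq_measure[OF fin]
  let ?d = "CARD('n)" and ?C = "cball_inf x h"
  define s where "s = h - r"
  have s: "0 < s" "s < 1" "h / 2 \<le> s" using r by (auto simp: s_def)
  let ?B = "ball_inf y s" and ?BB = "ball_inf y ((1 + v) * s)"
  have B_C: "?B \<subseteq> ?C" and C_BB: "?C \<subseteq> ?BB"
    using balls_around_cball_inf[OF y(1) v(2) r(1,4)] by (simp_all add: s_def)
  obtain F where F: "\<And>z. z \<in> ?BB \<Longrightarrow> f z \<le> F" and mass: "ennreal (v * s ^ ?d * F) \<le> emeasure M ?B"
    using reg_set_density_bound[OF y(2) s(1,2) v(1) finite_measure.emeasure_finite[OF fin]] by auto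
  have "y \<in> ?BB" using v s by (intro center_in_ball_inf) simp
  then have "0 < F" using F y(3) by force
  have "emeasure M ?C \<le> ennreal F * emeasure lborel ?C"
    unfolding M using F C_BB by (intro emeasure_density_le_sup) auto
  also have "ennreal F * emeasure lborel ?C = ennreal (F * (2 * h) ^ ?d)"
    using r \<open>0 < F\<close> by (simp add: emeasure_lborel_cball_inf ennreal_mult)
  finally have measure_C: "measure M ?C \<le> F * (2 * h) ^ ?d"
    using r \<open>0 < F\<close> by (simp add: emeasure_eq_measure ennreal_le_iff)
  define \<theta> where "\<theta> = v * F / 2 ^ (?d + 1)"
  define L where "L = {z \<in> ?B. \<theta> \<le> f z}"
  have "v * s ^ ?d * F - \<theta> * measure lborel ?B \<le> F * measure lborel L"
    unfolding L_def using F B_C C_BB s v \<open>0 < F\<close> mass[unfolded M]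
    by (intro measure_level_set_ge) (auto simp: \<theta>_def emeasure_lborel_ball_inf)
  moreover have "\<theta> * measure lborel ?B = v * s ^ ?d * F / 2"
    using s by (simp add: measure_def emeasure_lborel_ball_inf \<theta>_def power_mult_distrib)
  ultimately have "v * s ^ ?d * F / 2 \<le> F * measure lborel L"
    by linarith
  then have "F * (v * s ^ ?d / 2) \<le> F * measure lborel L"
    by (simp add: ac_simps)
  then have "v * s ^ ?d / 2 \<le> measure lborel L"
    using \<open>0 < F\<close> by simp
  moreover have "h ^ ?d * (v / 2 ^ (?d + 1)) \<le> v * s ^ ?d / 2"
    using power_mono[OF s(3), of ?d] r v by (simp add: power_divide field_simps)
  ultimately have "h ^ ?d * (v / 2 ^ (?d + 1)) \<le> measure lborel L" by linarith
  moreover have "emeasure lborel L \<le> emeasure lborel ?B" unfolding L_def by (intro emeasure_mono) auto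
  then have "emeasure lborel L = ennreal (measure lborel L)"
    using s by (intro emeasure_eq_ennreal_measure) (auto simp: emeasure_lborel_ball_inf top_unique)
  ultimately have "ennreal (h ^ ?d * (v / 2 ^ (?d + 1))) \<le> emeasure lborel L"
    by (simp add: ennreal_leI)
  moreover have "L \<in> sets borel" unfolding L_def by measurable
  moreover have "L \<subseteq> ?C" "\<And>z. z \<in> L \<Longrightarrow> \<theta> \<le> f z" using B_C by (auto simp: L_def)
  ultimately show ?thesis
    using that[of F L] \<open>0 < F\<close> measure_C unfolding \<theta>_def by blast
qed

lemma lambda_min_gram_ge_of_reg_set:
  fixes M :: "(real^'n) measure" and f :: "real^'n \<Rightarrow> real"
  assumes [measurable]: "f \<in> borel_measurable borel"
    and M: "M = density lborel (\<lambda>z. ennreal (f z))" and fin: "finite_measure M"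
    and v: "0 < v" "v < 1" and "0 < \<beta>" and r: "0 < r" "2 * r \<le> h" "h \<le> 1" "3 * r \<le> v * h"
    and y: "y \<in> cball_inf x r" "y \<in> reg_set v M f" "0 < f y"
  shows "v * c_min TYPE('n) \<beta> (v / 2 ^ (CARD('n) + 1)) * measure M (cball_inf x h)
      / 2 ^ (3 * CARD('n) + 1) \<le> lambda_min (multi_idx \<beta>) (gram M x h)"
proof -
  note emeasure_eq_measure = finite_measure.emeasure_eq_measure[OF fin]
  let ?d = "CARD('n)" and ?a = "v / 2 ^ (CARD('n) + 1)"
  let ?cm = "c_min TYPE('n) \<beta> ?a"
  have h: "0 < h" using r by simp
  have fin_C: "emeasure M (cball_inf x h) < \<infinity>" by (simp add: emeasure_eq_measure)
  obtain F L where "0 < F" and measure_C: "measure M (cball_inf x h) \<le> F * (2 * h) ^ ?d"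
    and L[measurable]: "L \<in> sets borel" and "L \<subseteq> cball_inf x h"
    and level: "\<And>z. z \<in> L \<Longrightarrow> v * F / 2 ^ (?d + 1) \<le> f z"
    and large: "ennreal (h ^ ?d * ?a) \<le> emeasure lborel L"
    using large_level_set_in_cball_inf[OF assms(1-3) v r y] by blast
  let ?L' = "(\<lambda>u. x + h *\<^sub>R u) -` L"
  let ?G = "gram_matrix lebesgue ?L' (\<lambda>\<nu> z. Phi 0 1 z \<nu>)"
  have "ennreal ?a \<le> emeasure lebesgue ?L'"
    using v by (intro emeasure_lebesgue_vimage_rescale_ge[OF h L large]) simp
  moreover note vimage_rescale_subset_cball_inf[OF h \<open>L \<subseteq> cball_inf x h\<close>]
  ultimately have cm_le: "?cm \<le> lambda_min (multi_idx \<beta>) ?G"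
    using \<open>0 < \<beta>\<close> by (intro c_min_le_lambda_min) auto
  have cm_nonneg: "0 \<le> ?cm" using c_min_nonneg[OF \<open>0 < \<beta>\<close> divide_two_power_le_1[OF v]] .
  have "v * ?cm * measure M (cball_inf x h) / 2 ^ (3 * ?d + 1)
      \<le> v * ?cm * (F * (2 * h) ^ ?d) / 2 ^ (3 * ?d + 1)"
    using measure_C v cm_nonneg by (intro divide_right_mono mult_left_mono) auto
  also have "\<dots> = h ^ ?d * (v * F / 2 ^ (?d + 1)) * ?cm / 2 ^ ?d"
  proof -
    have "(2::real) ^ (3 * ?d + 1) = 2 ^ ?d * 2 ^ ?d * 2 ^ (?d + 1)"
      by (simp flip: power_add)
    then show ?thesis by (simp add: power_mult_distrib field_simps)
  qed
  also have "\<dots> \<le> h ^ ?d * (v * F / 2 ^ (?d + 1)) * ?cm"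
    using h v \<open>0 < F\<close> cm_nonneg by (intro divide_le_self) auto
  also have "\<dots> \<le> h ^ ?d * (v * F / 2 ^ (?d + 1)) * lambda_min (multi_idx \<beta>) ?G"
    using h v \<open>0 < F\<close> cm_le by (intro mult_left_mono) auto
  also have "\<dots> \<le> lambda_min (multi_idx \<beta>) (gram M x h)"
    using M fin_C h v \<open>0 < F\<close> \<open>0 < \<beta>\<close> \<open>L \<subseteq> cball_inf x h\<close> level
    by (intro lambda_min_gram_ge_level_set) auto
  finally show ?thesis .
qed

lemma lambda_min_gram_multi_idx_le_1:
  assumes "0 < \<beta>" "\<beta> \<le> 1" "cball_inf x h \<in> sets M" "emeasure M (cball_inf x h) < \<infinity>"
  shows "lambda_min (multi_idx \<beta>) (gram M x h) = measure M (cball_inf x h)"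
proof -
  have "Phi x h z (\<lambda>_. 0) = 1" for z by (simp add: Phi_def)
  then have "gram M x h (\<lambda>_. 0) (\<lambda>_. 0) = measure M (cball_inf x h)"
    using assms by (simp add: gram_def)
  moreover have "eigenvalues_on {\<lambda>_. 0} A = {A (\<lambda>_. 0) (\<lambda>_. 0)}" for A :: "('a \<Rightarrow> nat) \<Rightarrow> _"
    by (auto simp: eigenvalues_on_def)
  ultimately show ?thesis
    using assms by (simp add: multi_idx_le_1 lambda_min_def)
qed

lemma lambda_min_gram_ge_of_le_1:
  fixes M :: "(real^'n) measure"
  assumes "finite_measure M" "cball_inf x h \<in> sets M" "0 < v" "v < 1" "0 < \<beta>" "\<beta> \<le> 1"
  shows "v * c_min TYPE('n) \<beta> (v / 2 ^ (CARD('n) + 1)) * measure M (cball_inf x h)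
      / 2 ^ (3 * CARD('n) + 1) \<le> lambda_min (multi_idx \<beta>) (gram M x h)"
proof -
  let ?\<mu> = "measure M (cball_inf x h)" and ?cm = "c_min TYPE('n) \<beta> (v / 2 ^ (CARD('n) + 1))"
  have cm: "0 \<le> ?cm" "?cm \<le> 1"
    by (rule c_min_nonneg[OF assms(5) divide_two_power_le_1[OF assms(3,4)]]) (rule c_min_le_1)
  have "v * ?cm * ?\<mu> / 2 ^ (3 * CARD('n) + 1) \<le> v * ?cm * ?\<mu>"
    using assms(3) cm by (intro divide_le_self one_le_power) auto
  also have "\<dots> \<le> ?\<mu>"
    using assms(3,4) cm by (intro mult_left_le_one_le mult_le_one) auto
  also have "\<dots> = lambda_min (multi_idx \<beta>) (gram M x h)"
    using assms by (simp add: lambda_min_gram_multi_idx_le_1 finite_measure.emeasure_eq_measure)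
  finally show ?thesis .
qed

theorem mainTheorem13:
  fixes M :: "(real^'n) measure" and f :: "real^'n \<Rightarrow> real"
    and v \<xi> \<beta> r h :: real and x :: "real^'n"
  assumes "prob_space M"
    and "f \<in> borel_measurable lborel" and "\<And>y. f y \<ge> 0"
    and "M = density lborel (\<lambda>y. ennreal (f y))"
    and "0 < v" "v < 1" "0 < \<xi>" "0 < \<beta>" "0 < r" "r \<le> 1/2"
    and "cball_inf x r \<inter> reg_set v M f \<inter> {y. f y \<ge> \<xi>} \<noteq> {}"
    and "2 * r \<le> h" "h \<le> 1"
  shows "measure M (cball_inf x h) \<ge> v * \<xi> * (h / 2) ^ CARD('n) \<and>
         (\<beta> \<le> 1 \<or> 3 * r \<le> v * h \<longrightarrow>
         lambda_min (multi_idx \<beta>) (gram M x h) \<ge>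
           v * c_min TYPE('n) \<beta> (v / 2 ^ (CARD('n) + 1)) * measure M (cball_inf x h)
             / 2 ^ (3 * CARD('n) + 1))"
proof -
  have fin: "finite_measure M" using assms(1) by (rule prob_space.axioms(1))
  have f: "f \<in> borel_measurable borel" using assms(2) by (simp add: measurable_lborel1)
  have C: "cball_inf x h \<in> sets M" using assms(4) by simp
  obtain y where y: "y \<in> cball_inf x r" "y \<in> reg_set v M f" "\<xi> \<le> f y"
    using assms(11) by blast
  then have "0 < f y" using assms(7) by linarith
  have "v * \<xi> * (h / 2) ^ CARD('n) \<le> measure M (cball_inf x h)"
    using assms y by (intro measure_cball_inf_ge_of_reg_set[OF fin C]) auto
  moreover have "v * c_min TYPE('n) \<beta> (v / 2 ^ (CARD('n) + 1)) * measure M (cball_inf x h)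
      / 2 ^ (3 * CARD('n) + 1) \<le> lambda_min (multi_idx \<beta>) (gram M x h)"
    if "\<beta> \<le> 1 \<or> 3 * r \<le> v * h"
    using that lambda_min_gram_ge_of_le_1[OF fin C assms(5,6,8)]
      lambda_min_gram_ge_of_reg_set[OF f assms(4) fin assms(5,6,8,9,12,13) _ y(1,2) \<open>0 < f y\<close>]
    by (cases "\<beta> \<le> 1") auto
  ultimately show ?thesis by blast
qed

end
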